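(* Let $f\in C([0,1])$ and $\varepsilon>0$. If $K\in\mathbb{N}^+$ satisfies $|f(x_1)-f(x_2)|<\varepsilon/2$ for all $x_1,x_2\in[0,1]$ with $|x_1-x_2|<1/K$, then there exists a function $\phi$ generated by a $\sigma$-activated network with width $2$ and depth $3$ such that $\|\phi\|_{L^\infty([0,1])}\le\|f\|_{L^\infty([0,1])}+1$ and $|\phi(x)-f(x)|<\varepsilon$ for all $x\in\bigcup_{k=0}^{K-1}\big[\tfrac{2k}{2K},\tfrac{2k+1}{2K}\big]$.
   Context: Let $\sigma_1:\mathbb{R}\to\mathbb{R}$ be the continuous triangular-wave function of period $2$: $\sigma_1(x)=|x|$ for $x\in[-1,1]$, $\sigma_1(x+2)=\sigma_1(x)$. The activation is $\sigma(x)=\sigma_1(x)$ for $x\ge0$ and $\sigma(x)=x/(|x|+1)$ for $x<0$, applied entrywise. A function generated by a $\sigma$-activated network with one input, width $N$ and depth $L$ is a function of the form $\mathcal{L}_{\ell}\circ\sigma\circ\mathcal{L}_{\ell-1}\circ\cdots\circ\sigma\circ\mathcal{L}_0$ with $\ell\le L$ hidden layers, affine maps $\mathcal{L}_i$, $\mathcal{L}_0$ with domain $\mathbb{R}$, $\mathcal{L}_\ell$ with codomain $\mathbb{R}$, and at most $N$ neurons in each hidden layer. *)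

theory Defs
  imports "HOL-Analysis.Analysis"
begin

text \<open>Triangular wave of period 2: equals |x| on [-1,1].\<close>
definition sigma1 :: "real \<Rightarrow> real" where
  "sigma1 x = \<bar>x - 2 * of_int \<lfloor>(x + 1) / 2\<rfloor>\<bar>"

definition sigma :: "real \<Rightarrow> real" where
  "sigma x = (if x \<ge> 0 then sigma1 x else x / (\<bar>x\<bar> + 1))"

text \<open>hidden_feats N k h n: h x is the output vector (entries h x j, j < n) of the
  k-th hidden layer (after activation) of a sigma-network with one input and
  at most N neurons per hidden layer.\<close>
inductive hidden_feats :: "nat \<Rightarrow> nat \<Rightarrow> (real \<Rightarrow> nat \<Rightarrow> real) \<Rightarrow> nat \<Rightarrow> bool" where
  base: "\<lbrakk>1 \<le> n; n \<le> N; \<And>x j. h x j = sigma (a j * x + b j)\<rbrakk>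
          \<Longrightarrow> hidden_feats N 1 h n"
| step: "\<lbrakk>hidden_feats N k g m; 1 \<le> n; n \<le> N;
          \<And>x j. h x j = sigma ((\<Sum>i<m. W j i * g x i) + c j)\<rbrakk>
          \<Longrightarrow> hidden_feats N (Suc k) h n"

text \<open>Functions generated by a sigma-activated network with one input, width N, depth L
  (at most L hidden layers; l = 0 gives an affine map).\<close>
definition sigma_net :: "nat \<Rightarrow> nat \<Rightarrow> (real \<Rightarrow> real) \<Rightarrow> bool" where
  "sigma_net N L \<phi> \<longleftrightarrow>
     (\<exists>a b. \<forall>x. \<phi> x = a * x + b) \<or>
     (\<exists>l g m w c. 1 \<le> l \<and> l \<le> L \<and> hidden_feats N l g m \<and>
        (\<forall>x. \<phi> x = (\<Sum>i<m. w i * g x i) + c))"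

end

theory Submission
  imports Defs "HOL-Number_Theory.Cong"
begin

(* On the k-th piece [2k/(2K), (2k+1)/(2K)] the first hidden layer outputs (x, 2Kx - 2k), since
   sigma is the identity on [0,1] and the triangular wave is 2-periodic.  An affine combination of
   these is the constant -(k+1)M, which the rational branch of sigma maps to 1/m_k - 1 with
   m_k = 1 + (k+1)M; so the third layer evaluates the triangular wave at 2 gamma / m_k, which is
   2 (gamma mod m_k) / m_k.  When K! divides M the moduli m_k are pairwise coprime (as in Goedel's
   beta function), so by the Chinese remainder theorem a single integer gamma prescribes all these
   residues and encodes the samples f(k/K) to precision 2/M; uniform continuity does the rest. *)

lemma sigma1_add_even: "sigma1 (x + 2 * of_int q) = sigma1 x"
proof -
  have "(x + 2 * of_int q + 1) / 2 = (x + 1) / 2 + of_int q"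
    by (simp add: field_simps)
  then have "\<lfloor>(x + 2 * of_int q + 1) / 2\<rfloor> = \<lfloor>(x + 1) / 2\<rfloor> + q"
    by (simp only: floor_add_int[symmetric])
  then show ?thesis
    unfolding sigma1_def by simp
qed

lemma sigma1_eq_self:
  assumes "0 \<le> x" "x \<le> 1"
  shows "sigma1 x = x"
proof (cases "x = 1")
  case False
  with assms have "\<lfloor>(x + 1) / 2\<rfloor> = 0"
    by (simp add: floor_eq_iff)
  with assms show ?thesis
    by (simp add: sigma1_def)
qed (simp add: sigma1_def)

lemma sigma1_on_tooth:
  assumes "2 * of_int k \<le> x" "x \<le> 2 * of_int k + 1"
  shows "sigma1 x = x - 2 * of_int k"
  using sigma1_add_even[of "x - 2 * of_int k" k] sigma1_eq_self[of "x - 2 * of_int k"] assms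
  by simp

lemma sigma1_nonneg: "0 \<le> sigma1 x"
  by (simp add: sigma1_def)

lemma sigma1_le_one: "sigma1 x \<le> 1"
proof -
  have "of_int \<lfloor>(x + 1) / 2\<rfloor> \<le> (x + 1) / 2" "(x + 1) / 2 < of_int \<lfloor>(x + 1) / 2\<rfloor> + 1"
    by linarith+
  then show ?thesis
    unfolding sigma1_def by (auto simp: field_simps)
qed

lemma sigma1_double_ratio:
  fixes n m :: nat
  assumes "2 * (n mod m) \<le> m"
  shows "sigma1 (2 * real n / real m) = 2 * real (n mod m) / real m"
proof (cases "m = 0")
  case False
  have "real n = real (n mod m) + real (n div m) * real m"
    by (metis mod_div_mult_eq of_nat_add of_nat_mult)
  then have "2 * real n / real m = 2 * real (n mod m) / real m + 2 * of_int (int (n div m))"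
    using False by (simp add: field_simps)
  moreover have "2 * real (n mod m) / real m \<le> 1"
    using assms False by (simp add: field_simps flip: of_nat_mult)
  ultimately show ?thesis
    using sigma1_add_even[of "2 * real (n mod m) / real m" "int (n div m)"]
    by (simp add: sigma1_eq_self)
qed (simp add: sigma1_def)

lemma sigma_nonneg_eq: "0 \<le> x \<Longrightarrow> sigma x = sigma1 x"
  by (simp add: sigma_def)

lemma sigma_gt_minus_one: "sigma x > -1"
proof (cases "0 \<le> x")
  case True
  then show ?thesis
    using sigma1_nonneg[of x] by (simp add: sigma_nonneg_eq)
next
  case False
  then show ?thesis
    by (simp add: sigma_def field_simps)
qed

lemma sigma_neg_plus_one: "0 < a \<Longrightarrow> sigma (- a) + 1 = 1 / (a + 1)"
  by (simp add: sigma_def field_simps)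

lemma sigma_shift_eq_sigma1:
  assumes "-1 < y" "0 \<le> \<beta>"
  shows "sigma (\<beta> * y + \<beta>) = sigma1 (\<beta> * (y + 1))"
proof -
  have "\<beta> * y + \<beta> = \<beta> * (y + 1)"
    by (simp add: algebra_simps)
  moreover have "0 \<le> \<beta> * (y + 1)"
    using assms by simp
  ultimately show ?thesis
    by (simp add: sigma_nonneg_eq)
qed

lemma coprime_one_plus_mult:
  fixes a b M :: nat
  assumes "a \<le> b" "(b - a) dvd M"
  shows "coprime (1 + a * M) (1 + b * M)"
proof (rule coprimeI)
  fix d
  assume da: "d dvd 1 + a * M" and db: "d dvd 1 + b * M"
  have "b * (1 + a * M) = a * (1 + b * M) + (b - a)"
    using assms(1) by (simp add: algebra_simps)
  moreover have "d dvd b * (1 + a * M)"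
    using da by (rule dvd_mult)
  moreover have "d dvd a * (1 + b * M)"
    using db by (rule dvd_mult)
  ultimately have "d dvd b - a"
    by (metis dvd_add_right_iff)
  with assms(2) have "d dvd a * M"
    by (simp add: dvd_trans)
  with da show "is_unit d"
    by (metis add.commute dvd_add_right_iff)
qed

lemma coprime_Goedel_moduli:
  fixes M :: nat
  assumes "fact K dvd M" "i < K" "j < K" "i \<noteq> j"
  shows "coprime (1 + (i + 1) * M) (1 + (j + 1) * M)"
proof -
  have *: "coprime (1 + (i + 1) * M) (1 + (j + 1) * M)" if "i < j" "j < K" for i j
  proof (rule coprime_one_plus_mult)
    have "j + 1 - (i + 1) dvd fact K"
      using that by (intro dvd_fact) auto
    then show "j + 1 - (i + 1) dvd M"
      using assms(1) by (rule dvd_trans)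
  qed (use that in simp)
  show ?thesis
  proof (cases "i < j")
    case True
    with * assms show ?thesis by blast
  next
    case False
    with * assms have "coprime (1 + (j + 1) * M) (1 + (i + 1) * M)"
      by simp
    then show ?thesis
      by (rule coprime_commute[THEN iffD1])
  qed
qed

lemma nat_floor_half_approx:
  fixes m :: nat
  assumes "0 \<le> t" "t \<le> 1" "0 < m"
  defines "r \<equiv> nat \<lfloor>t * real m / 2\<rfloor>"
  shows "2 * r \<le> m" "\<bar>2 * real r / real m - t\<bar> < 2 / real m"
proof -
  have "0 \<le> t * real m / 2"
    using assms(1) by simp
  then have r: "real r \<le> t * real m / 2" "t * real m / 2 < real r + 1"
    unfolding r_def by linarith+
  moreover have "t * real m \<le> real m"
    using mult_right_mono[OF assms(2), of "real m"] by simp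
  ultimately have "real (2 * r) \<le> real m"
    by simp
  then show "2 * r \<le> m"
    by (simp only: of_nat_le_iff)
  have "\<bar>2 * real r - t * real m\<bar> < 2"
    using r by linarith
  with assms(3) show "\<bar>2 * real r / real m - t\<bar> < 2 / real m"
    by (simp add: field_simps abs_less_iff)
qed

lemma sigma1_encodes_samples:
  fixes t :: "nat \<Rightarrow> real" and M :: nat
  assumes "fact K dvd M" "0 < M" "\<And>k. k < K \<Longrightarrow> 0 \<le> t k \<and> t k \<le> 1"
  obtains \<gamma> :: nat
  where "\<And>k. k < K \<Longrightarrow> \<bar>sigma1 (2 * real \<gamma> / real (1 + (k + 1) * M)) - t k\<bar> < 2 / real M"
proof -
  define m where "m k = 1 + (k + 1) * M" for k
  define r where "r k = nat \<lfloor>t k * real (m k) / 2\<rfloor>" for k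
  have m_pos: "0 < m k" for k
    by (simp add: m_def)
  note r = nat_floor_half_approx[OF _ _ m_pos, of "t k" k for k, folded r_def]
  have "\<forall>i\<in>{..<K}. \<forall>j\<in>{..<K}. i \<noteq> j \<longrightarrow> coprime (m i) (m j)"
    unfolding m_def using coprime_Goedel_moduli[OF assms(1)] by blast
  then obtain \<gamma> where \<gamma>: "\<forall>k\<in>{..<K}. [\<gamma> = r k] (mod m k)"
    using chinese_remainder_nat[of "{..<K}"] by blast
  show ?thesis
  proof (rule that)
    fix k
    assume k: "k < K"
    have "2 * r k \<le> m k"
      using r(1) assms(3)[OF k] by blast
    then have "r k < m k"
      using m_pos[of k] by linarith
    then have "\<gamma> mod m k = r k"
      using \<gamma> k by (simp add: cong_def)
    then have "sigma1 (2 * real \<gamma> / real (m k)) = 2 * real (r k) / real (m k)"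
      using sigma1_double_ratio \<open>2 * r k \<le> m k\<close> by metis
    moreover have "2 / real (m k) \<le> 2 / real M"
      using assms(2) by (simp add: m_def frac_le)
    ultimately show "\<bar>sigma1 (2 * real \<gamma> / real (1 + (k + 1) * M)) - t k\<bar> < 2 / real M"
      using r(2) assms(3)[OF k] unfolding m_def by fastforce
  qed
qed

lemma sigma1_encodes_samples_within:
  fixes t :: "nat \<Rightarrow> real"
  assumes "0 < \<delta>" "\<And>k. k < K \<Longrightarrow> 0 \<le> t k \<and> t k \<le> 1"
  obtains M \<gamma> :: nat
  where "0 < M"
    "\<And>k. k < K \<Longrightarrow> \<bar>sigma1 (2 * real \<gamma> / (1 + (real k + 1) * real M)) - t k\<bar> < \<delta>"
proof -
  obtain L :: nat where L: "2 / \<delta> < real L"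
    using reals_Archimedean2 by blast
  define M where "M = fact K * L"
  have "0 < 2 / \<delta>"
    using assms(1) by simp
  with L have "0 < real L"
    by linarith
  then have "2 / real L < \<delta>"
    using L assms(1) by (simp add: field_simps)
  moreover have "real L \<le> real M"
    unfolding M_def using mult_right_mono[OF fact_ge_1, of "real L" K] by simp
  ultimately have "0 < M" "2 / real M < \<delta>"
    using \<open>0 < real L\<close> frac_le[of 2 2 "real L" "real M"] by auto
  moreover have "fact K dvd M"
    unfolding M_def by simp
  ultimately obtain \<gamma> :: nat
    where \<gamma>: "\<And>k. k < K \<Longrightarrow> \<bar>sigma1 (2 * real \<gamma> / real (1 + (k + 1) * M)) - t k\<bar> < 2 / real M"
    using sigma1_encodes_samples assms(2) by blast
  show ?thesis
  proof (rule that[OF \<open>0 < M\<close>])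
    fix k
    assume "k < K"
    then show "\<bar>sigma1 (2 * real \<gamma> / (1 + (real k + 1) * real M)) - t k\<bar> < \<delta>"
      using \<gamma>[of k] \<open>2 / real M < \<delta>\<close> by (simp add: algebra_simps)
  qed
qed

lemma sigma_net_2_3_chain:
  "sigma_net 2 3 (\<lambda>x. w * sigma (p * sigma (u0 * sigma (a0 * x + b0) + u1 * sigma (a1 * x + b1) + c) + q) + d)"
proof -
  define h1 where "h1 x (j :: nat) = sigma ((if j = 0 then a0 else a1) * x + (if j = 0 then b0 else b1))"
    for x j
  define h2 where "h2 x (j :: nat) = sigma ((\<Sum>i<2. (if i = 0 then u0 else u1) * h1 x i) + c)"
    for x j
  define h3 where "h3 x (j :: nat) = sigma ((\<Sum>i<1. p * h2 x i) + q)" for x j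
  have "hidden_feats 2 1 h1 2"
    by (rule hidden_feats.base) (simp_all add: h1_def)
  then have "hidden_feats 2 (Suc 1) h2 1"
    by (rule hidden_feats.step) (simp_all add: h2_def)
  then have "hidden_feats 2 (Suc (Suc 1)) h3 1"
    by (rule hidden_feats.step[where W = "\<lambda>_ _. p" and c = "\<lambda>_. q"]) (simp_all add: h3_def)
  moreover have "h3 x 0 = sigma (p * sigma (u0 * sigma (a0 * x + b0) + u1 * sigma (a1 * x + b1) + c) + q)"
    for x
    by (simp add: h3_def h2_def h1_def numeral_2_eq_2)
  ultimately show ?thesis
    unfolding sigma_net_def
    by (intro disjI2 exI[of _ "Suc (Suc 1)"] exI[of _ h3] exI[of _ 1] exI[of _ "\<lambda>_. w"] exI[of _ d])
      simp
qed

lemma piece_near_sample: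
  assumes "k < K" "x \<in> {real (2 * k) / real (2 * K) .. real (2 * k + 1) / real (2 * K)}"
  shows "x \<in> {0..1}" "\<bar>x - real k / real K\<bar> < 1 / real K"
proof -
  have K: "0 < real K"
    using assms(1) by simp
  have x: "real k / real K \<le> x" "x \<le> real k / real K + 1 / (2 * real K)"
    using assms(2) K by (auto simp: field_simps)
  have "real k / real K + 1 / (2 * real K) \<le> 1"
    using assms(1) K by (simp add: field_simps)
  moreover have "0 \<le> real k / real K"
    by simp
  ultimately show "x \<in> {0..1}"
    using x unfolding atLeastAtMost_iff by linarith
  have "1 / (2 * real K) < 1 / real K"
    using K by (simp add: field_simps)
  with x show "\<bar>x - real k / real K\<bar> < 1 / real K"
    by simp
qed

definition Goedel_net :: "nat \<Rightarrow> real \<Rightarrow> real \<Rightarrow> real \<Rightarrow> real" where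
  "Goedel_net K M \<beta> x =
     sigma (\<beta> * sigma (M / 2 * sigma (2 * real K * x) - M * real K * sigma x - M) + \<beta>)"

lemma sigma_net_Goedel_net: "sigma_net 2 3 (\<lambda>x. w * Goedel_net K M \<beta> x + d)"
  using sigma_net_2_3_chain[of w \<beta> "- M * real K" 1 0 "M / 2" "2 * real K" 0 "- M" \<beta> d]
  by (simp add: Goedel_net_def algebra_simps)

lemma Goedel_net_bounds:
  assumes "0 \<le> \<beta>"
  shows "0 \<le> Goedel_net K M \<beta> x" "Goedel_net K M \<beta> x \<le> 1"
  using sigma_shift_eq_sigma1[OF sigma_gt_minus_one assms] sigma1_nonneg sigma1_le_one
  by (simp_all add: Goedel_net_def)

lemma Goedel_net_on_piece:
  assumes "k < K" "0 < M" "0 \<le> \<beta>"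
    and "x \<in> {real (2 * k) / real (2 * K) .. real (2 * k + 1) / real (2 * K)}"
  shows "Goedel_net K M \<beta> x = sigma1 (\<beta> / (1 + (real k + 1) * M))"
proof -
  have K: "0 < real K"
    using assms(1) by simp
  have Kx: "2 * real k \<le> 2 * real K * x" "2 * real K * x \<le> 2 * real k + 1"
    using assms(4) K by (auto simp: field_simps)
  have "sigma x = x"
    using piece_near_sample(1)[OF assms(1,4)]
    by (simp add: sigma_nonneg_eq sigma1_eq_self)
  moreover have "sigma (2 * real K * x) = 2 * real K * x - 2 * real k"
  proof -
    have "0 \<le> 2 * real K * x"
      using Kx(1) by linarith
    then show ?thesis
      using Kx sigma1_on_tooth[of "int k"] by (simp add: sigma_nonneg_eq)
  qed
  ultimately have "M / 2 * sigma (2 * real K * x) - M * real K * sigma x - M = - ((real k + 1) * M)"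
    by (simp only:) (simp add: algebra_simps)
  moreover have "sigma (- ((real k + 1) * M)) + 1 = 1 / (1 + (real k + 1) * M)"
    using sigma_neg_plus_one[of "(real k + 1) * M"] assms(2) by (simp add: add.commute)
  ultimately show ?thesis
    unfolding Goedel_net_def
    using sigma_shift_eq_sigma1[OF sigma_gt_minus_one assms(3)] by simp
qed

lemma abs_le_SUP_abs:
  fixes f :: "'a::topological_space \<Rightarrow> real"
  assumes "continuous_on S f" "compact S" "y \<in> S"
  shows "\<bar>f y\<bar> \<le> (SUP z\<in>S. \<bar>f z\<bar>)"
proof (rule cSUP_upper[OF assms(3)])
  have "compact ((\<lambda>z. \<bar>f z\<bar>) ` S)"
    using assms(1,2) by (intro compact_continuous_image continuous_intros)
  then show "bdd_above ((\<lambda>z. \<bar>f z\<bar>) ` S)"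
    by (intro bounded_imp_bdd_above compact_imp_bounded)
qed

theorem theorem14:
  fixes f :: "real \<Rightarrow> real" and \<epsilon> :: real and K :: nat
  assumes "continuous_on {0..1} f"
    and "\<epsilon> > 0"
    and "K \<ge> 1"
    and "\<forall>x1\<in>{0..1}. \<forall>x2\<in>{0..1}. \<bar>x1 - x2\<bar> < 1 / real K \<longrightarrow> \<bar>f x1 - f x2\<bar> < \<epsilon> / 2"
  shows "\<exists>\<phi>. sigma_net 2 3 \<phi> \<and>
           (\<forall>x\<in>{0..1}. \<bar>\<phi> x\<bar> \<le> (SUP y\<in>{0..1}. \<bar>f y\<bar>) + 1) \<and>
           (\<forall>x\<in>(\<Union>k<K. {real (2*k) / real (2*K) .. real (2*k+1) / real (2*K)}).
              \<bar>\<phi> x - f x\<bar> < \<epsilon>)"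
proof -
  define A where "A = (SUP y\<in>{0..1}. \<bar>f y\<bar>) + 1"
  have f_le: "\<bar>f y\<bar> \<le> A - 1" if "y \<in> {0..1}" for y
    unfolding A_def using abs_le_SUP_abs[OF assms(1) compact_Icc that] by simp
  then have "0 < A"
    using abs_ge_zero[of "f 0"] by fastforce
  have sample: "real k / real K \<in> {0..1}" if "k < K" for k
    using that by simp
  define t where "t k = (f (real k / real K) + A) / (2 * A)" for k
  have "0 \<le> t k \<and> t k \<le> 1" if "k < K" for k
    using f_le[OF sample[OF that]] \<open>0 < A\<close> unfolding t_def by (auto simp: field_simps abs_le_iff)
  then obtain M \<gamma> :: nat where "0 < M"
    and \<gamma>: "\<And>k. k < K \<Longrightarrow> \<bar>sigma1 (2 * real \<gamma> / (1 + (real k + 1) * real M)) - t k\<bar> < \<epsilon> / (4 * A)"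
    using sigma1_encodes_samples_within[of "\<epsilon> / (4 * A)" K t] assms(2) \<open>0 < A\<close> by auto
  define \<phi> where "\<phi> x = 2 * A * Goedel_net K M (2 * real \<gamma>) x - A" for x
  have "sigma_net 2 3 \<phi>"
    using sigma_net_Goedel_net[of "2 * A" K M "2 * real \<gamma>" "- A"] by (simp add: \<phi>_def[abs_def])
  have "\<bar>\<phi> x\<bar> \<le> A" for x
    using Goedel_net_bounds[of "2 * real \<gamma>" K M x] \<open>0 < A\<close> unfolding \<phi>_def
    by (simp add: abs_le_iff)
  moreover have "\<bar>\<phi> x - f x\<bar> < \<epsilon>"
    if "k < K" "x \<in> {real (2*k) / real (2*K) .. real (2*k+1) / real (2*K)}" for k x
  proof -
    have "\<phi> x - f (real k / real K) = 2 * A * (sigma1 (2 * real \<gamma> / (1 + (real k + 1) * real M)) - t k)"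
      using Goedel_net_on_piece[OF that(1) _ _ that(2)] \<open>0 < M\<close> \<open>0 < A\<close>
      by (simp add: \<phi>_def t_def field_simps)
    then have "\<bar>\<phi> x - f (real k / real K)\<bar> = 2 * A * \<bar>sigma1 (2 * real \<gamma> / (1 + (real k + 1) * real M)) - t k\<bar>"
      using \<open>0 < A\<close> by (simp add: abs_mult)
    also have "\<dots> < 2 * A * (\<epsilon> / (4 * A))"
      using \<gamma>[OF that(1)] \<open>0 < A\<close> by (intro mult_strict_left_mono) auto
    also have "\<dots> = \<epsilon> / 2"
      using \<open>0 < A\<close> by simp
    finally have "\<bar>\<phi> x - f (real k / real K)\<bar> < \<epsilon> / 2" .
    moreover have "\<bar>f x - f (real k / real K)\<bar> < \<epsilon> / 2"
      using assms(4) piece_near_sample[OF that] sample[OF that(1)] by blast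
    ultimately show ?thesis
      by linarith
  qed
  ultimately show ?thesis
    using \<open>sigma_net 2 3 \<phi>\<close> unfolding A_def by blast
qed

end
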